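(* Let $(\mathbb V,g,J)$ be a (pseudo-)hermitian vector space and $A$ a hermitian endomorphism. Let $\varphi\in\mathcal K(\mathbb V)$ be an algebraic Kähler curvature tensor whose operator satisfies $[\varphi(X),A]=0$ for all $X\in\mathfrak u(g,J)$ (equivalently $[\varphi(x,y),A]=0$ for all $x,y\in\mathbb V$). Extend $\varphi$ complex-multilinearly to $\mathbb V^{\mathbb C}=\mathbb V\otimes_{\mathbb R}\mathbb C$ and, for each eigenvalue $\lambda$ of $A$, let $\mathbb V_\lambda\subseteq\mathbb V^{\mathbb C}$ be the generalized $\lambda$-eigenspace. Then $\varphi(x,y,u,v)=0$ whenever two of the vectors $x,y,u,v$ lie in $\mathbb V_\lambda$ and $\mathbb V_{\lambda'}$ respectively with $\lambda\ne\lambda'$ (and each of $x,y,u,v$ lies in some generalized eigenspace).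
   Context: (Pseudo-)hermitian vector space $(\mathbb V,g,J)$: nondegenerate symmetric $g$ of any signature, $J^2=-\mathrm{Id}$, $g(J\cdot,J\cdot)=g$; hermitian = $g$-symmetric, $J$-commuting; $\mathfrak u(g,J)$ = $g$-skew endomorphisms commuting with $J$. $\mathcal K(\mathbb V)$ is the space of $R\in\bigotimes^4\mathbb V^*$ with $R(x,y,u,v)=-R(y,x,u,v)=-R(x,y,v,u)$, $R(x,y,u,v)=R(u,v,x,y)$, $R(x,y,u,v)+R(x,v,y,u)+R(x,u,v,y)=0$, $R(x,y,u,v)=R(Jx,Jy,u,v)=R(x,y,Ju,Jv)$. Such $R$ is viewed as $(1,3)$ via $R(x,y,u,v)=g(x,R(u,v)y)$ and as an operator on $\mathfrak u(g,J)$ via $R(u\wedge_Jv)=4R(u,v)$, where $u\wedge v=g(u,\cdot)\otimes v-g(v,\cdot)\otimes u$, $u\wedge_Jv=u\wedge v+Ju\wedge Jv$. *)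

theory Defs
  imports "HOL-Analysis.Analysis"
begin

text \<open>The real vector space V is modelled as real^'n (any finite dimension).
  A 4-tensor R on V is given by its components R i j k l w.r.t. the standard basis.\<close>

definition gform :: "real^'n^'n \<Rightarrow> real^'n \<Rightarrow> real^'n \<Rightarrow> real" where
  "gform G x y = x \<bullet> (G *v y)"

definition pseudo_hermitian :: "real^'n^'n \<Rightarrow> real^'n^'n \<Rightarrow> bool" where
  "pseudo_hermitian G J \<longleftrightarrow>
     (\<forall>x y. gform G x y = gform G y x) \<and>
     (\<forall>x. (\<forall>y. gform G x y = 0) \<longrightarrow> x = 0) \<and>
     J ** J = - mat 1 \<and>
     (\<forall>x y. gform G (J *v x) (J *v y) = gform G x y)"

definition hermitian_endo :: "real^'n^'n \<Rightarrow> real^'n^'n \<Rightarrow> real^'n^'n \<Rightarrow> bool" where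
  "hermitian_endo G J A \<longleftrightarrow>
     (\<forall>x y. gform G (A *v x) y = gform G x (A *v y)) \<and> A ** J = J ** A"

definition tens4 :: "('n::finite \<Rightarrow> 'n \<Rightarrow> 'n \<Rightarrow> 'n \<Rightarrow> real) \<Rightarrow>
    real^'n \<Rightarrow> real^'n \<Rightarrow> real^'n \<Rightarrow> real^'n \<Rightarrow> real" where
  "tens4 R x y u v = (\<Sum>i\<in>UNIV. \<Sum>j\<in>UNIV. \<Sum>k\<in>UNIV. \<Sum>l\<in>UNIV.
       R i j k l * x$i * y$j * u$k * v$l)"

text \<open>Complex-multilinear extension to the complexification V^C = complex^'n.\<close>
definition tens4C :: "('n::finite \<Rightarrow> 'n \<Rightarrow> 'n \<Rightarrow> 'n \<Rightarrow> real) \<Rightarrow>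
    complex^'n \<Rightarrow> complex^'n \<Rightarrow> complex^'n \<Rightarrow> complex^'n \<Rightarrow> complex" where
  "tens4C R x y u v = (\<Sum>i\<in>UNIV. \<Sum>j\<in>UNIV. \<Sum>k\<in>UNIV. \<Sum>l\<in>UNIV.
       complex_of_real (R i j k l) * x$i * y$j * u$k * v$l)"

definition kaehler_curv :: "real^'n^'n \<Rightarrow> ('n::finite \<Rightarrow> 'n \<Rightarrow> 'n \<Rightarrow> 'n \<Rightarrow> real) \<Rightarrow> bool" where
  "kaehler_curv J R \<longleftrightarrow> (\<forall>x y u v.
     tens4 R x y u v = - tens4 R y x u v \<and>
     tens4 R x y u v = - tens4 R x y v u \<and>
     tens4 R x y u v = tens4 R u v x y \<and>
     tens4 R x y u v + tens4 R x v y u + tens4 R x u v y = 0 \<and>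
     tens4 R x y u v = tens4 R (J *v x) (J *v y) u v \<and>
     tens4 R x y u v = tens4 R x y (J *v u) (J *v v))"

definition curv_endo :: "real^'n^'n \<Rightarrow> ('n::finite \<Rightarrow> 'n \<Rightarrow> 'n \<Rightarrow> 'n \<Rightarrow> real) \<Rightarrow>
    real^'n \<Rightarrow> real^'n \<Rightarrow> real^'n^'n" where
  "curv_endo G R u v = (THE M. \<forall>x y. gform G x (M *v y) = tens4 R x y u v)"

definition cmat :: "real^'n^'m \<Rightarrow> complex^'n^'m" where
  "cmat A = (\<chi> i j. complex_of_real (A$i$j))"

definition is_eigenvalueC :: "real^'n^'n \<Rightarrow> complex \<Rightarrow> bool" where
  "is_eigenvalueC A lam \<longleftrightarrow> (\<exists>x. x \<noteq> 0 \<and> cmat A *v x = lam *s x)"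

definition gen_eigenspace :: "real^'n^'n \<Rightarrow> complex \<Rightarrow> (complex^'n) set" where
  "gen_eigenspace A lam =
     {x. \<exists>m::nat. ((\<lambda>z. cmat A *v z - lam *s z) ^^ m) x = 0}"

end

theory Submission
  imports Defs
begin

text \<open>Since A is g-self-adjoint, its complex generalized eigenspaces for distinct
  eigenvalues are orthogonal for the complex-bilinear extension of g: by induction on the
  nilpotency orders, (b - a) g(x, y) is a combination of pairings of x or y with vectors
  of lower order. The endomorphisms R(u,v) commute with A, hence preserve each generalized
  eigenspace, so phi(x, y, u, v) = g(x, R(u,v) y) vanishes as soon as x and y lie in
  different eigenspaces. The remaining configurations are reduced to this one by the pair
  symmetry and the first Bianchi identity.\<close>

lemma matrix_eq_if_inner_eq:
  fixes M N :: "real^'n^'m"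
  assumes "\<And>x y. x \<bullet> (M *v y) = x \<bullet> (N *v y)"
  shows "M = N"
proof (rule matrix_eq[THEN iffD2], intro allI)
  fix y
  have "(M *v y - N *v y) \<bullet> (M *v y - N *v y) = 0"
    using assms by (simp add: inner_diff)
  then show "M *v y = N *v y" by simp
qed

definition curv_matrix :: "('n::finite \<Rightarrow> 'n \<Rightarrow> 'n \<Rightarrow> 'n \<Rightarrow> real) \<Rightarrow>
    real^'n \<Rightarrow> real^'n \<Rightarrow> real^'n^'n" where
  "curv_matrix R u v = (\<chi> i j. \<Sum>k\<in>UNIV. \<Sum>l\<in>UNIV. R i j k l * u$k * v$l)"

lemma tens4_eq_inner_curv_matrix: "tens4 R x y u v = x \<bullet> (curv_matrix R u v *v y)"
  unfolding tens4_def curv_matrix_def inner_vec_def matrix_vector_mult_def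
  by (simp add: sum_distrib_left sum_distrib_right mult_ac)

lemma sum_axis_right: "(\<Sum>l\<in>UNIV. f l * (axis m (1::real) $ l)) = f m"
  by (simp add: axis_def if_distrib if_distribR cong del: if_weak_cong)

lemma tens4_axis: "tens4 R (axis i 1) (axis j 1) (axis k 1) (axis l 1) = R i j k l"
  unfolding tens4_def by (simp only: sum_axis_right)

lemma kaehler_curv_pair_symmetric:
  assumes "kaehler_curv J R"
  shows "R i j k l = R k l i j"
  using assms unfolding kaehler_curv_def by (metis tens4_axis)

lemma kaehler_curv_bianchi:
  assumes "kaehler_curv J R"
  shows "R i j k l + R i l j k + R i k l j = 0"
  using assms unfolding kaehler_curv_def by (metis tens4_axis)

lemma pseudo_hermitian_left_invertible:
  assumes "pseudo_hermitian G J"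
  shows "\<exists>B. B ** G = mat 1"
  unfolding matrix_left_invertible_ker
proof (intro allI impI)
  fix y assume "G *v y = 0"
  then have "\<forall>x. gform G y x = 0"
    using assms by (simp add: pseudo_hermitian_def gform_def)
  then show "y = 0" using assms by (simp add: pseudo_hermitian_def)
qed

lemma curv_endo_eq:
  assumes "pseudo_hermitian G J" "B ** G = mat 1"
  shows "curv_endo G R u v = B ** curv_matrix R u v"
proof -
  have GB: "G ** B = mat 1" using assms(2) matrix_left_right_inverse by blast
  let ?P = "\<lambda>M. \<forall>x y. gform G x (M *v y) = tens4 R x y u v"
  have "?P (B ** curv_matrix R u v)"
    by (simp add: gform_def tens4_eq_inner_curv_matrix matrix_vector_mul_assoc matrix_mul_assoc GB)
  moreover have "M = B ** curv_matrix R u v" if "?P M" for M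
  proof -
    have "G ** M = curv_matrix R u v"
      using that by (intro matrix_eq_if_inner_eq)
        (simp add: gform_def tens4_eq_inner_curv_matrix matrix_vector_mul_assoc)
    then show ?thesis by (metis assms(2) matrix_mul_assoc matrix_mul_lid)
  qed
  ultimately show ?thesis unfolding curv_endo_def by (rule the_equality)
qed

lemma curv_matrix_axis: "curv_matrix R (axis k 1) (axis l 1) $ i $ j = R i j k l"
  unfolding curv_matrix_def by (simp add: sum_axis_right)

lemma curv_matrix_eq_curv_endo:
  assumes "pseudo_hermitian G J"
  shows "curv_matrix R u v = G ** curv_endo G R u v"
proof -
  obtain B where B: "B ** G = mat 1"
    using pseudo_hermitian_left_invertible[OF assms] by blast
  then have "G ** B = mat 1" using matrix_left_right_inverse by blast
  then show ?thesis by (simp add: curv_endo_eq[OF assms B] matrix_mul_assoc)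
qed

lemma hermitian_endo_transpose:
  fixes G J A :: "real^'n^'n"
  assumes "hermitian_endo G J A"
  shows "transpose A ** G = G ** A"
proof (rule matrix_eq_if_inner_eq)
  fix x y :: "real^'n"
  have "x \<bullet> ((transpose A ** G) *v y) = gform G (A *v x) y"
    by (simp add: gform_def matrix_vector_mul_assoc[symmetric]) (metis inner_commute dot_lmul_matrix)
  also have "\<dots> = x \<bullet> ((G ** A) *v y)"
    using assms by (simp add: hermitian_endo_def gform_def matrix_vector_mul_assoc)
  finally show "x \<bullet> ((transpose A ** G) *v y) = x \<bullet> ((G ** A) *v y)" .
qed

lemma cmat_mult: "cmat (A ** B) = cmat A ** cmat B"
  by (simp add: cmat_def matrix_matrix_mult_def vec_eq_iff)

lemma cmat_transpose: "cmat (transpose A) = transpose (cmat A)"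
  by (simp add: cmat_def transpose_def vec_eq_iff)

lemma sum_swap_pairs:
  "(\<Sum>i\<in>UNIV. \<Sum>j\<in>UNIV. \<Sum>k\<in>UNIV. \<Sum>l\<in>UNIV. f i j k l) =
   (\<Sum>k\<in>UNIV. \<Sum>l\<in>UNIV. \<Sum>i\<in>UNIV. \<Sum>j\<in>UNIV. f i j k l)"
proof -
  have "(\<Sum>i\<in>UNIV. \<Sum>j\<in>UNIV. \<Sum>k\<in>UNIV. \<Sum>l\<in>UNIV. f i j k l) =
        (\<Sum>k\<in>UNIV. \<Sum>i\<in>UNIV. \<Sum>j\<in>UNIV. \<Sum>l\<in>UNIV. f i j k l)"
    by (subst sum.swap) (rule sum.swap)
  also have "\<dots> = (\<Sum>k\<in>UNIV. \<Sum>l\<in>UNIV. \<Sum>i\<in>UNIV. \<Sum>j\<in>UNIV. f i j k l)"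
    by (rule sum.cong[OF refl], subst sum.swap, rule sum.swap)
  finally show ?thesis .
qed

lemma sum_rotate3:
  "(\<Sum>j\<in>UNIV. \<Sum>k\<in>UNIV. \<Sum>l\<in>UNIV. f j k l) = (\<Sum>k\<in>UNIV. \<Sum>l\<in>UNIV. \<Sum>j\<in>UNIV. f j k l)"
  by (subst sum.swap) (rule sum.cong[OF refl], rule sum.swap)

text \<open>The complex-bilinear (not hermitian) dot product, so that
  cdot x (cmat G *v y) is the complex-bilinear extension of g.\<close>

definition cdot :: "'a::comm_semiring_1^'n \<Rightarrow> 'a^'n \<Rightarrow> 'a" where
  "cdot x y = (\<Sum>i\<in>UNIV. x$i * y$i)"

lemma cdot_zero_left [simp]: "cdot 0 y = 0"
  and cdot_zero_right [simp]: "cdot x 0 = 0"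
  by (simp_all add: cdot_def)

lemma cdot_matrix_left: "cdot (C *v x) z = cdot x (transpose C *v z)"
  unfolding cdot_def matrix_vector_mult_def transpose_def
  by (simp add: sum_distrib_left sum_distrib_right mult_ac) (rule sum.swap)

lemma cdot_diff_left:
  fixes p q z :: "'a::field^'n"
  shows "cdot (p - a *s q) z = cdot p z - a * cdot q z"
  by (simp add: cdot_def sum_subtractf sum_distrib_left algebra_simps)

lemma cdot_diff_right:
  fixes x p q :: "'a::field^'n"
  shows "cdot x (p - b *s q) = cdot x p - b * cdot x q"
  by (simp add: cdot_def sum_subtractf sum_distrib_left algebra_simps)

definition gen_eigenspace_mat :: "'a::field^'n^'n \<Rightarrow> 'a \<Rightarrow> ('a^'n) set" where
  "gen_eigenspace_mat C a = {x. \<exists>m. ((\<lambda>z. C *v z - a *s z) ^^ m) x = 0}"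

lemma gen_eigenspace_eq: "gen_eigenspace A lam = gen_eigenspace_mat (cmat A) lam"
  by (simp add: gen_eigenspace_def gen_eigenspace_mat_def)

lemma cdot_shift:
  fixes C K :: "'a::field^'n^'n"
  assumes "transpose C ** K = K ** C"
  shows "cdot (C *v x - a *s x) (K *v y) - cdot x (K *v (C *v y - b *s y))
    = (b - a) * cdot x (K *v y)"
  using assms
  by (simp add: cdot_diff_left cdot_matrix_left matrix_vector_mul_assoc matrix_vector_mult_diff_distrib
      vector_scalar_commute cdot_diff_right algebra_simps)

lemma gen_eigenspaces_orthogonal:
  fixes C K :: "'a::field^'n^'n"
  assumes sym: "transpose C ** K = K ** C" and "a \<noteq> b"
    and "x \<in> gen_eigenspace_mat C a" "y \<in> gen_eigenspace_mat C b"
  shows "cdot x (K *v y) = 0"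
proof -
  let ?f = "\<lambda>z. C *v z - a *s z" and ?g = "\<lambda>z. C *v z - b *s z"
  have "cdot x (K *v y) = 0" if "(?f ^^ m) x = 0" "(?g ^^ n) y = 0" for m n x y
    using that
  proof (induction m arbitrary: x n y)
    case (Suc m)
    note IH_x = Suc.IH
    from Suc.prems show ?case
    proof (induction n arbitrary: y)
      case (Suc n)
      have "(?f ^^ m) (?f x) = 0" "(?g ^^ n) (?g y) = 0"
        using Suc.prems by (simp_all add: funpow_Suc_right del: funpow.simps)
      then have "cdot (?f x) (K *v y) = 0" "cdot x (K *v ?g y) = 0"
        using IH_x Suc.IH Suc.prems by blast+
      then have "(b - a) * cdot x (K *v y) = 0"
        using cdot_shift[OF sym, of x a y b] by simp
      then show ?case using \<open>a \<noteq> b\<close> by simp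
    qed simp
  qed simp
  then show ?thesis using assms(3,4) by (auto simp: gen_eigenspace_mat_def)
qed

lemma gen_eigenspace_mat_commuting:
  fixes B C :: "'a::field^'n^'n"
  assumes "B ** C = C ** B" "z \<in> gen_eigenspace_mat C a"
  shows "B *v z \<in> gen_eigenspace_mat C a"
proof -
  let ?f = "\<lambda>z. C *v z - a *s z"
  have commute: "(?f ^^ m) (B *v w) = B *v (?f ^^ m) w" for m w
    by (induction m)
      (simp_all add: matrix_vector_mul_assoc assms(1) matrix_vector_mult_diff_distrib
        vector_scalar_commute)
  obtain m where "(?f ^^ m) z = 0" using assms(2) by (auto simp: gen_eigenspace_mat_def)
  then have "(?f ^^ m) (B *v z) = 0" by (simp add: commute)
  then show ?thesis by (auto simp: gen_eigenspace_mat_def)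
qed

lemma tens4C_eq_sum_cdot:
  "tens4C R x y u v = (\<Sum>k\<in>UNIV. \<Sum>l\<in>UNIV.
      u$k * v$l * cdot x (cmat (curv_matrix R (axis k 1) (axis l 1)) *v y))"
  unfolding tens4C_def
  by (subst sum_swap_pairs)
    (simp add: cdot_def matrix_vector_mult_def cmat_def curv_matrix_axis sum_distrib_left mult_ac)

lemma tens4C_eq_0_if_first_pair_in_distinct_gen_eigenspaces:
  assumes G: "pseudo_hermitian G J" and A: "hermitian_endo G J A"
    and comm: "\<forall>p q. curv_endo G R p q ** A = A ** curv_endo G R p q"
    and "x \<in> gen_eigenspace A a" "y \<in> gen_eigenspace A b" "a \<noteq> b"
  shows "tens4C R x y u v = 0"
proof -
  have sym: "transpose (cmat A) ** cmat G = cmat G ** cmat A"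
    using hermitian_endo_transpose[OF A] by (metis cmat_mult cmat_transpose)
  have "cdot x (cmat (curv_matrix R p q) *v y) = 0" for p q
  proof -
    have "cmat (curv_endo G R p q) *v y \<in> gen_eigenspace_mat (cmat A) b"
      using assms(5) comm by (intro gen_eigenspace_mat_commuting)
        (simp_all add: cmat_mult[symmetric] gen_eigenspace_eq)
    then show ?thesis
      using gen_eigenspaces_orthogonal[OF sym \<open>a \<noteq> b\<close>] assms(4)
      by (simp add: curv_matrix_eq_curv_endo[OF G] cmat_mult matrix_vector_mul_assoc[symmetric]
          gen_eigenspace_eq)
  qed
  then show ?thesis by (simp add: tens4C_eq_sum_cdot)
qed

lemma tens4C_pair_symmetric:
  assumes "kaehler_curv J R"
  shows "tens4C R u v x y = tens4C R x y u v"
  unfolding tens4C_def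
  by (subst sum_swap_pairs) (simp add: kaehler_curv_pair_symmetric[OF assms] mult_ac)

lemma tens4C_bianchi:
  assumes "kaehler_curv J R"
  shows "tens4C R x y u v + tens4C R x v y u + tens4C R x u v y = 0"
proof -
  let ?t = "\<lambda>r. \<Sum>i\<in>UNIV. \<Sum>j\<in>UNIV. \<Sum>k\<in>UNIV. \<Sum>l\<in>UNIV.
       complex_of_real (r i j k l) * x$i * y$j * u$k * v$l"
  have "tens4C R x v y u = ?t (\<lambda>i j k l. R i l j k)"
    unfolding tens4C_def
    by (rule sum.cong[OF refl], subst sum_rotate3) (simp add: mult_ac)
  moreover have "tens4C R x u v y = ?t (\<lambda>i j k l. R i k l j)"
    unfolding tens4C_def
    by (rule sum.cong[OF refl], subst (2) sum_rotate3) (simp add: mult_ac)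
  ultimately have "tens4C R x y u v + tens4C R x v y u + tens4C R x u v y =
      ?t (\<lambda>i j k l. R i j k l + R i l j k + R i k l j)"
    by (simp add: tens4C_def sum.distrib[symmetric] algebra_simps)
  then show ?thesis by (simp add: kaehler_curv_bianchi[OF assms])
qed

theorem mainTheorem7:
  fixes G J A :: "real^'n^'n"
    and phi :: "'n \<Rightarrow> 'n \<Rightarrow> 'n \<Rightarrow> 'n \<Rightarrow> real"
    and x y u v :: "complex^'n"
    and a b c d :: complex
  assumes "pseudo_hermitian G J"
    and "hermitian_endo G J A"
    and "kaehler_curv J phi"
    and "\<forall>p q. curv_endo G phi p q ** A = A ** curv_endo G phi p q"
    and "is_eigenvalueC A a" "is_eigenvalueC A b" "is_eigenvalueC A c" "is_eigenvalueC A d"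
    and "x \<in> gen_eigenspace A a" "y \<in> gen_eigenspace A b"
    and "u \<in> gen_eigenspace A c" "v \<in> gen_eigenspace A d"
    and "\<not> (a = b \<and> b = c \<and> c = d)"
  shows "tens4C phi x y u v = 0"
proof -
  note vanish = tens4C_eq_0_if_first_pair_in_distinct_gen_eigenspaces[OF assms(1,2,4)]
  consider "a \<noteq> b" | "c \<noteq> d" | "a = b" "c = d" "a \<noteq> c"
    using assms(13) by blast
  then show ?thesis
  proof cases
    case 1
    then show ?thesis using vanish assms(9,10) by blast
  next
    case 2
    then have "tens4C phi u v x y = 0" using vanish assms(11,12) by blast
    then show ?thesis by (simp add: tens4C_pair_symmetric[OF assms(3)])
  next
    case 3
    then have "tens4C phi x v y u = 0" "tens4C phi x u v y = 0"
      using vanish assms(9,11,12) by blast+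
    then show ?thesis using tens4C_bianchi[OF assms(3), of x y u v] by simp
  qed
qed

end
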